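(* Assume (H). For any finite sequence of types ${\bf x}=(x_1,\dots,x_r)\in[K]^r$ and any non-negative measurable functions $G_1,G_2$, $$E^{\bf x}\Big[\sum_{v\in F}G_1(v,[F]_v)\,G_2(F_v)\Big]=\sum_{j=1}^rb_{x_j}\sum_{h\ge0}\widehat E^{{\bf x},j,h}\Big[\frac{G_1(V,F)\,E^{(e(V))}[G_2(T)]}{b_{e(V)}}\Big].$$
   Context: Let $K\ge1$ be an integer and $[K]=\{1,\dots,K\}$. ${\boldsymbol\zeta}=(\zeta^{(i)})$ is a family of probability measures on the set $\mathcal W_K$ of finite (possibly empty) $[K]$-valued sequences; $p({\bf w})\in\mathbb Z_+^K$ counts entries of each type and $\mu^{(i)}=p_*\zeta^{(i)}$. Set $m_{ij}=\sum z_j\mu^{(i)}(\{{\bf z}\})$, $M=(m_{ij})$ and $Q^{(i)}_{jk}=\partial^2\varphi^{(i)}/\partial s_j\partial s_k({\bf 1})$, with $\varphi^{(i)}({\bf s})=\sum\mu^{(i)}(\{{\bf z}\})\prod s_l^{z_l}$. Hypothesis (H) means all of the following: $M$ is irreducible; some $\mu^{(i)}$ charges $\{\sum z_l\ne1\}$; the spectral radius of $M$ is $1$; and all $Q^{(i)}_{jk}<\infty$. Then ${\bf b}$ is the right $1$-eigenvector of $M$ (positive entries) normalized by $\sum a_ib_i=1$, where ${\bf a}$ is the left $1$-eigenvector with $\sum a_i=1$. Trees and forests. Trees are finite subsets $t$ of the set $\mathcal U$ of finite words over $\mathbb N$ containing $\varnothing$, such that $ui\in t$ implies $u\in t$ and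 $uj\in t$ for $j\le i$, with types $e(\cdot)\in[K]$ and ${\bf w}_t(u)=(e(u1),\dots,e(uc_t(u)))$. A forest is $f=\bigcup_kk\,t_{(k)}$. For $u\in f$: - $f_u=\{v:uv\in f\}$ is the fringe subtree at $u$, with inherited types; - $[f]_u=\{u\}\cup(f\setminus uf_u)$ is the forest pruned at $u$, with restricted types. Galton–Watson laws. $P^{(i)}(T=t)=\prod_u\zeta^{(e(u))}({\bf w}_t(u))$ for root type $i$. $P^{\bf x}$ is the law of $F=\bigcup_{k=1}^rk\,T_k$ with independent $T_k\sim P^{(x_k)}$. $E^{(i)},E^{\bf x}$ denote the corresponding expectations. Size-biased tree. Let $\widehat\zeta^{(i)}({\bf w})=\frac{p({\bf w})\cdot{\bf b}}{b_i}\zeta^{(i)}({\bf w})$, a probability measure on $\mathcal W_K$. Build an infinite random $K$-type tree with a spine $V_0=\varnothing,V_1,V_2,\dots$, where $e(V_0)=i$: - a spine vertex $V_n$ of type $j$ has children types ${\bf w}$ drawn from $\widehat\zeta^{(j)}$; given ${\bf w}$, an index $l$ is chosen with probability $b_{w_l}/(p({\bf w})\cdot{\bf b})$, and $V_{n+1}=V_nl$; - every non-spine vertex of type $j$ has children types drawn from $\zeta^{(j)}$; - all choices are independent. $\widehat P^{(i),h}$ is the law of the pair $([\,\text{tree}\,]_{V_h},V_h)$, a finite tree with a distinguished vertex at height $h$. For ${\bf x}=(x_1,\dots,x_r)$, $1\le j\le r$ and $h\ge0$, $\widehat P^{{\bf x},j,h}$ is the law of the pointed forest $(F,V)$ where: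 - the components $F_l$, $l\ne j$, and $F_j$ are independent; - $F_l\sim P^{(x_l)}$ for $l\neq j$; - $(F_j,V')\sim\widehat P^{(x_j),h}$, and $V=jV'$. $\widehat E^{{\bf x},j,h}$ is the corresponding expectation, and $T$ denotes the identity map on trees. *)

theory Defs
  imports "HOL-Probability.Probability" "Jordan_Normal_Form.Spectral_Radius" "HOL-Library.Sublist"
begin

text \<open>Types are the integers 1..K. A word of U is a nat list with letters \<ge> 1.
  A typed tree / forest is a finite partial map from words to types
  (its domain is the set of vertices, its values the types e(u)).
  Offspring laws: zeta i is a pmf on finite type sequences (nat lists).\<close>

type_synonym ttree = "nat list \<rightharpoonup> nat"

definition mean_enn :: "(nat \<Rightarrow> nat list pmf) \<Rightarrow> nat \<Rightarrow> nat \<Rightarrow> ennreal" where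
  "mean_enn \<zeta> i j = (\<integral>\<^sup>+ w. of_nat (count_list w j) \<partial>measure_pmf (\<zeta> i))"

definition mentry :: "(nat \<Rightarrow> nat list pmf) \<Rightarrow> nat \<Rightarrow> nat \<Rightarrow> real" where
  "mentry \<zeta> i j = enn2real (mean_enn \<zeta> i j)"

text \<open>The mean matrix M = (m_ij), i,j in [K]; JNF matrices are 0-indexed.\<close>
definition Mmat :: "nat \<Rightarrow> (nat \<Rightarrow> nat list pmf) \<Rightarrow> real mat" where
  "Mmat K \<zeta> = mat K K (\<lambda>(i, j). mentry \<zeta> (i + 1) (j + 1))"

text \<open>Q^(i)_jk = second partial derivative of the generating function at 1
  = E[z_j (z_k - delta_jk)].\<close>
definition Qentry :: "(nat \<Rightarrow> nat list pmf) \<Rightarrow> nat \<Rightarrow> nat \<Rightarrow> nat \<Rightarrow> ennreal" where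
  "Qentry \<zeta> i j k = (\<integral>\<^sup>+ w. of_nat (count_list w j * (count_list w k - (if j = k then 1 else 0)))
                         \<partial>measure_pmf (\<zeta> i))"

definition irreducible_mat :: "nat \<Rightarrow> real mat \<Rightarrow> bool" where
  "irreducible_mat K A \<longleftrightarrow> (\<forall>i<K. \<forall>j<K. \<exists>n>0. (A ^\<^sub>m n) $$ (i, j) > 0)"

definition hypH :: "nat \<Rightarrow> (nat \<Rightarrow> nat list pmf) \<Rightarrow> bool" where
  "hypH K \<zeta> \<longleftrightarrow>
     irreducible_mat K (Mmat K \<zeta>)
   \<and> (\<exists>i\<in>{1..K}. measure_pmf.prob (\<zeta> i) {w. length w \<noteq> 1} > 0)
   \<and> spectral_radius (map_mat complex_of_real (Mmat K \<zeta>)) = 1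
   \<and> (\<forall>i\<in>{1..K}. \<forall>j\<in>{1..K}. \<forall>k\<in>{1..K}. Qentry \<zeta> i j k < \<infinity>)"

definition nchild :: "ttree \<Rightarrow> nat list \<Rightarrow> nat" where
  "nchild t u = card {i. u @ [i] \<in> dom t}"

definition childtypes :: "ttree \<Rightarrow> nat list \<Rightarrow> nat list" where
  "childtypes t u = map (\<lambda>i. the (t (u @ [i]))) [1..<Suc (nchild t u)]"

definition is_tree :: "nat \<Rightarrow> ttree \<Rightarrow> bool" where
  "is_tree K t \<longleftrightarrow> finite (dom t) \<and> [] \<in> dom t
     \<and> (\<forall>u i. u @ [i] \<in> dom t \<longrightarrow> u \<in> dom t \<and> 1 \<le> i \<and> (\<forall>j\<in>{1..i}. u @ [j] \<in> dom t))
     \<and> ran t \<subseteq> {1..K}"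

definition forest_of :: "ttree list \<Rightarrow> ttree" where
  "forest_of ts = (\<lambda>w. case w of [] \<Rightarrow> None
      | k # u \<Rightarrow> if 1 \<le> k \<and> k \<le> length ts then (ts ! (k - 1)) u else None)"

definition fringe :: "ttree \<Rightarrow> nat list \<Rightarrow> ttree" where
  "fringe f u = (\<lambda>v. f (u @ v))"

definition prune :: "ttree \<Rightarrow> nat list \<Rightarrow> ttree" where
  "prune f u = (\<lambda>w. if (\<exists>v. v \<noteq> [] \<and> w = u @ v) then None else f w)"

definition gw :: "nat \<Rightarrow> (nat \<Rightarrow> nat list pmf) \<Rightarrow> nat \<Rightarrow> ttree \<Rightarrow> real" where
  "gw K \<zeta> i t = (if is_tree K t \<and> t [] = Some i
      then (\<Prod>u\<in>dom t. pmf (\<zeta> (the (t u))) (childtypes t u)) else 0)"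

definition E_tree :: "nat \<Rightarrow> (nat \<Rightarrow> nat list pmf) \<Rightarrow> nat \<Rightarrow> (ttree \<Rightarrow> ennreal) \<Rightarrow> ennreal" where
  "E_tree K \<zeta> i G = (\<Sum>\<^sub>\<infinity> t\<in>UNIV. ennreal (gw K \<zeta> i t) * G t)"

definition E_forest :: "nat \<Rightarrow> (nat \<Rightarrow> nat list pmf) \<Rightarrow> nat list \<Rightarrow> (ttree \<Rightarrow> ennreal) \<Rightarrow> ennreal" where
  "E_forest K \<zeta> x G = (\<Sum>\<^sub>\<infinity> ts\<in>{ts. length ts = length x}.
      ennreal (\<Prod>l<length x. gw K \<zeta> (x ! l) (ts ! l)) * G (forest_of ts))"

definition zeta_hat :: "(nat \<Rightarrow> nat list pmf) \<Rightarrow> (nat \<Rightarrow> real) \<Rightarrow> nat \<Rightarrow> nat list \<Rightarrow> real" where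
  "zeta_hat \<zeta> b i w = sum_list (map b w) / b i * pmf (\<zeta> i) w"

text \<open>Law hat P^{(i),h} of ([tree]_{V_h}, V_h): the pruned tree consists of the spine
  vertices V_0..V_{h-1} (children drawn from hat zeta, next spine vertex V_n l chosen with
  probability b_{w_l}/(p(w).b)), the leaf V_h, and the non-spine vertices (children drawn
  from zeta), all choices independent.\<close>
definition sb_mass :: "nat \<Rightarrow> (nat \<Rightarrow> nat list pmf) \<Rightarrow> (nat \<Rightarrow> real) \<Rightarrow> nat \<Rightarrow> nat
    \<Rightarrow> ttree \<Rightarrow> nat list \<Rightarrow> real" where
  "sb_mass K \<zeta> b i h t v = (if is_tree K t \<and> t [] = Some i \<and> v \<in> dom t \<and> length v = h
        \<and> (\<forall>k. v @ [k] \<notin> dom t)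
      then (\<Prod>n<h. zeta_hat \<zeta> b (the (t (take n v))) (childtypes t (take n v))
                  * (b (the (t (take (Suc n) v))) / sum_list (map b (childtypes t (take n v)))))
         * (\<Prod>u\<in>{u\<in>dom t. \<not> prefix u v}. pmf (\<zeta> (the (t u))) (childtypes t u))
      else 0)"

text \<open>hat E^{x,j,h}[G(V,F)] for 1 \<le> j \<le> length x: component j is the size-biased
  pruned tree with distinguished vertex V', V = j V', other components independent GW.\<close>
definition E_hat :: "nat \<Rightarrow> (nat \<Rightarrow> nat list pmf) \<Rightarrow> (nat \<Rightarrow> real) \<Rightarrow> nat list \<Rightarrow> nat \<Rightarrow> nat
    \<Rightarrow> (nat list \<Rightarrow> ttree \<Rightarrow> ennreal) \<Rightarrow> ennreal" where
  "E_hat K \<zeta> b x j h G = (\<Sum>\<^sub>\<infinity> (ts, v')\<in>{ts. length ts = length x} \<times> UNIV.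
      ennreal ((\<Prod>l\<in>{..<length x} - {j - 1}. gw K \<zeta> (x ! l) (ts ! l))
               * sb_mass K \<zeta> b (x ! (j - 1)) h (ts ! (j - 1)) v')
      * G (j # v') (forest_of ts))"

end

(* Write a vertex of the forest as j u with u a vertex of the j-th tree t. Cutting t at u
   gives the pruned tree p = [t]_u, in which u is a leaf, and the fringe s = t_u, whose root
   has the type e(u) of u; grafting s back onto p at u inverts this, so (t, u) <-> ((p, u), s)
   is a bijection. Under the Galton-Watson law the weight of t is the product of the offspring
   weights of p away from u and the weight of s. Along the spine from the root to u the
   size-biased mass telescopes, the factors b(e(V_(n+1))) / b(e(V_n)) leaving
   b(e(u)) / b(root type) times the offspring weights of p away from u. Hence
   b(root) * (size-biased mass of (p, u)) * P^(e(u))(s) / b(e(u)) = P(t), and the identity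
   is a reindexing of sums of nonnegative terms, in which only the height h = |u| survives. *)

theory Submission
  imports Defs
begin

section \<open>Sums of nonnegative extended reals\<close>

text \<open>The library fact \<open>summable_on_ennreal\<close> is stated for \<open>ennreal_of_enat \<circ> f\<close>, not for an
  arbitrary \<open>ennreal\<close>-valued \<open>f\<close>.\<close>

lemma summable_on_ennreal_fun [simp]: "(f :: 'a \<Rightarrow> ennreal) summable_on A"
  by (simp add: nonneg_summable_on_complete)

lemma infsum_mono_set_ennreal:
  fixes f :: "'a \<Rightarrow> ennreal"
  assumes "A \<subseteq> B"
  shows "infsum f A \<le> infsum f B"
  by (rule infsum_mono_neutral) (use assms in auto)

lemma infsum_Sigma_finite_ennreal:
  fixes f :: "'a \<times> 'b \<Rightarrow> ennreal"
  assumes "finite A"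
  shows "infsum f (Sigma A B) = (\<Sum>x\<in>A. \<Sum>\<^sub>\<infinity>y\<in>B x. f (x, y))"
  using assms
proof (induction A rule: finite_induct)
  case (insert a A)
  have "Sigma (insert a A) B = Pair a ` B a \<union> Sigma A B" by auto
  moreover have "Pair a ` B a \<inter> Sigma A B = {}" using insert.hyps(2) by auto
  ultimately have "infsum f (Sigma (insert a A) B) = infsum f (Pair a ` B a) + infsum f (Sigma A B)"
    by (simp add: infsum_Un_disjoint)
  also have "infsum f (Pair a ` B a) = (\<Sum>\<^sub>\<infinity>y\<in>B a. f (a, y))"
    by (simp add: infsum_reindex inj_on_def o_def)
  finally show ?case using insert by simp
qed simp

text \<open>\<open>ennreal\<close> is not an instance of \<open>uniform_space\<close> or \<open>t3_space\<close>, so the library's Fubini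
  theorems for \<open>infsum\<close> do not apply; both sides are suprema of finite partial sums instead.\<close>

lemma infsum_Sigma_ennreal:
  fixes f :: "'a \<times> 'b \<Rightarrow> ennreal"
  shows "infsum f (Sigma A B) = (\<Sum>\<^sub>\<infinity>x\<in>A. \<Sum>\<^sub>\<infinity>y\<in>B x. f (x, y))"
proof (rule antisym)
  show "infsum f (Sigma A B) \<le> (\<Sum>\<^sub>\<infinity>x\<in>A. \<Sum>\<^sub>\<infinity>y\<in>B x. f (x, y))"
    unfolding nonneg_infsum_complete[of "Sigma A B" f, simplified]
  proof (rule SUP_least)
    fix F assume F: "F \<in> {F. finite F \<and> F \<subseteq> Sigma A B}"
    then have "finite (fst ` F)" "fst ` F \<subseteq> A" by auto
    have "sum f F = infsum f F" using F by simp
    also have "\<dots> \<le> infsum f (Sigma (fst ` F) B)"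
      using F by (intro infsum_mono_set_ennreal) force
    also have "\<dots> = (\<Sum>\<^sub>\<infinity>x\<in>fst ` F. \<Sum>\<^sub>\<infinity>y\<in>B x. f (x, y))"
      using \<open>finite (fst ` F)\<close> by (simp add: infsum_Sigma_finite_ennreal)
    also have "\<dots> \<le> (\<Sum>\<^sub>\<infinity>x\<in>A. \<Sum>\<^sub>\<infinity>y\<in>B x. f (x, y))"
      using \<open>fst ` F \<subseteq> A\<close> by (rule infsum_mono_set_ennreal)
    finally show "sum f F \<le> (\<Sum>\<^sub>\<infinity>x\<in>A. \<Sum>\<^sub>\<infinity>y\<in>B x. f (x, y))" .
  qed
  show "(\<Sum>\<^sub>\<infinity>x\<in>A. \<Sum>\<^sub>\<infinity>y\<in>B x. f (x, y)) \<le> infsum f (Sigma A B)"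
    unfolding nonneg_infsum_complete[of A "\<lambda>x. \<Sum>\<^sub>\<infinity>y\<in>B x. f (x, y)", simplified]
  proof (rule SUP_least)
    fix F assume F: "F \<in> {F. finite F \<and> F \<subseteq> A}"
    then have "(\<Sum>x\<in>F. \<Sum>\<^sub>\<infinity>y\<in>B x. f (x, y)) = infsum f (Sigma F B)"
      by (simp add: infsum_Sigma_finite_ennreal)
    also have "\<dots> \<le> infsum f (Sigma A B)" using F by (intro infsum_mono_set_ennreal) auto
    finally show "(\<Sum>x\<in>F. \<Sum>\<^sub>\<infinity>y\<in>B x. f (x, y)) \<le> infsum f (Sigma A B)" .
  qed
qed

lemma infsum_swap_ennreal:
  fixes f :: "'a \<Rightarrow> 'b \<Rightarrow> ennreal"
  shows "(\<Sum>\<^sub>\<infinity>x\<in>A. \<Sum>\<^sub>\<infinity>y\<in>B. f x y) = (\<Sum>\<^sub>\<infinity>y\<in>B. \<Sum>\<^sub>\<infinity>x\<in>A. f x y)"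
proof -
  have "(\<Sum>\<^sub>\<infinity>x\<in>A. \<Sum>\<^sub>\<infinity>y\<in>B. f x y) = (\<Sum>\<^sub>\<infinity>(x, y)\<in>A \<times> B. f x y)"
    by (simp add: infsum_Sigma_ennreal)
  also have "\<dots> = (\<Sum>\<^sub>\<infinity>(y, x)\<in>B \<times> A. f x y)"
    by (rule infsum_reindex_bij_witness[of _ prod.swap prod.swap]) auto
  also have "\<dots> = (\<Sum>\<^sub>\<infinity>y\<in>B. \<Sum>\<^sub>\<infinity>x\<in>A. f x y)"
    by (simp add: infsum_Sigma_ennreal)
  finally show ?thesis .
qed

lemma infsum_cmult_ennreal:
  fixes f :: "'a \<Rightarrow> ennreal"
  shows "c * infsum f A = (\<Sum>\<^sub>\<infinity>x\<in>A. c * f x)"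
  by (simp add: nonneg_infsum_complete SUP_mult_left_ennreal sum_distrib_left)

lemma infsum_divide_ennreal:
  fixes f :: "'a \<Rightarrow> ennreal"
  shows "infsum f A / c = (\<Sum>\<^sub>\<infinity>x\<in>A. f x / c)"
  by (simp add: divide_ennreal_def mult.commute[of _ "inverse c"] infsum_cmult_ennreal)

lemma infsum_sum_ennreal:
  fixes f :: "'i \<Rightarrow> 'a \<Rightarrow> ennreal"
  assumes "finite I"
  shows "(\<Sum>\<^sub>\<infinity>x\<in>A. \<Sum>i\<in>I. f i x) = (\<Sum>i\<in>I. infsum (f i) A)"
  using assms by induction (simp_all add: infsum_add)

lemma suminf_eq_infsum_ennreal:
  fixes f :: "nat \<Rightarrow> ennreal"
  shows "suminf f = infsum f UNIV"
  using has_sum_imp_sums[OF has_sum_infsum[OF summable_on_ennreal_fun]] by (simp add: sums_iff)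

section \<open>Pruning, fringes and grafting\<close>

definition is_leaf :: "ttree \<Rightarrow> nat list \<Rightarrow> bool" where
  "is_leaf t v \<longleftrightarrow> (\<forall>k. v @ [k] \<notin> dom t)"

lemma is_treeD:
  assumes "is_tree K t" "w @ [i] \<in> dom t"
  shows "w \<in> dom t" "1 \<le> i" "\<And>j. j \<in> {1..i} \<Longrightarrow> w @ [j] \<in> dom t"
  using assms unfolding is_tree_def by blast+

lemma
  assumes "is_tree K t"
  shows is_tree_finite: "finite (dom t)" and is_tree_Nil: "[] \<in> dom t"
    and is_tree_ran: "ran t \<subseteq> {1..K}"
  using assms unfolding is_tree_def by blast+

lemma is_treeI:
  assumes "finite (dom t)" "[] \<in> dom t" "ran t \<subseteq> {1..K}"
    and "\<And>w i. w @ [i] \<in> dom t \<Longrightarrow> w \<in> dom t \<and> 1 \<le> i \<and> (\<forall>j\<in>{1..i}. w @ [j] \<in> dom t)"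
  shows "is_tree K t"
  using assms unfolding is_tree_def by blast

lemma is_tree_prefix_closed:
  assumes "is_tree K t" "w \<in> dom t" "prefix u w"
  shows "u \<in> dom t"
proof -
  obtain z where "w = u @ z" using assms(3) by (auto simp: prefix_def)
  with assms(2) show ?thesis
  proof (induction z arbitrary: w rule: rev_induct)
    case (snoc a z)
    then show ?case using is_treeD(1)[OF assms(1), of "u @ z" a] by simp
  qed simp
qed

lemma is_tree_type_range:
  assumes "is_tree K t" "u \<in> dom t"
  shows "the (t u) \<in> {1..K}"
proof -
  have "the (t u) \<in> ran t" using assms(2) by (auto simp: ran_def)
  then show ?thesis using is_tree_ran[OF assms(1)] by blast
qed

lemma is_tree_children:
  assumes "is_tree K t"
  shows "{i. u @ [i] \<in> dom t} = {1..nchild t u}"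
proof (cases "{i. u @ [i] \<in> dom t} = {}")
  case False
  let ?S = "{i. u @ [i] \<in> dom t}"
  have "finite ((\<lambda>i. u @ [i]) -` dom t)"
    using is_tree_finite[OF assms] by (intro finite_vimageI) (auto intro: injI)
  moreover have "?S = (\<lambda>i. u @ [i]) -` dom t" by auto
  ultimately have fin: "finite ?S" by simp
  have "Max ?S \<in> ?S" using Max_in[OF fin False] .
  then have "{1..Max ?S} \<subseteq> ?S" using is_treeD(3)[OF assms] by blast
  moreover have "?S \<subseteq> {1..Max ?S}"
  proof
    fix i assume "i \<in> ?S"
    then show "i \<in> {1..Max ?S}" using Max_ge[OF fin] is_treeD(2)[OF assms, of u i] by simp
  qed
  ultimately have "?S = {1..Max ?S}" by blast
  moreover from this have "nchild t u = Max ?S"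
    unfolding nchild_def by (metis card_atLeastAtMost diff_Suc_1)
  ultimately show ?thesis by simp
qed (simp add: nchild_def)

lemma set_childtypes:
  assumes "is_tree K t"
  shows "set (childtypes t u) = (\<lambda>i. the (t (u @ [i]))) ` {i. u @ [i] \<in> dom t}"
  unfolding childtypes_def is_tree_children[OF assms] by auto

lemma childtypes_subset:
  assumes "is_tree K t"
  shows "set (childtypes t u) \<subseteq> {1..K}"
  unfolding set_childtypes[OF assms] using is_tree_type_range[OF assms] by blast

lemma childtypes_cong:
  assumes "\<And>i. t (u @ [i]) = t' (u' @ [i])"
  shows "childtypes t u = childtypes t' u'"
proof -
  have "nchild t u = nchild t' u'" unfolding nchild_def using assms by (simp add: domIff)
  then show ?thesis unfolding childtypes_def using assms by simp
qed

lemma is_leaf_extension: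
  assumes "is_tree K t" "is_leaf t v" "z \<noteq> []"
  shows "v @ z \<notin> dom t"
proof
  assume "v @ z \<in> dom t"
  moreover obtain c z' where "z = c # z'" using assms(3) by (cases z) auto
  ultimately have "v @ [c] \<in> dom t"
    using is_tree_prefix_closed[OF assms(1), of "v @ z" "v @ [c]"] by simp
  then show False using assms(2) unfolding is_leaf_def by blast
qed

lemma strict_prefix_snoc: "strict_prefix u (w @ [j]) \<longleftrightarrow> prefix u w"
  by (auto simp: strict_prefix_def)

lemma prune_eq: "prune t u w = (if strict_prefix u w then None else t w)"
  by (auto simp: prune_def strict_prefix_def prefix_def)

lemma dom_prune: "dom (prune t u) = {w \<in> dom t. \<not> strict_prefix u w}"
  by (auto simp: prune_eq split: if_splits)

lemma is_tree_prune:
  assumes "is_tree K t"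
  shows "is_tree K (prune t u)"
proof (rule is_treeI)
  show "finite (dom (prune t u))" "[] \<in> dom (prune t u)"
    using is_tree_finite[OF assms] is_tree_Nil[OF assms] unfolding dom_prune by auto
  have "ran (prune t u) \<subseteq> ran t" by (auto simp: ran_def prune_eq)
  then show "ran (prune t u) \<subseteq> {1..K}" using is_tree_ran[OF assms] by blast
  fix w i assume "w @ [i] \<in> dom (prune t u)"
  then have wi: "w @ [i] \<in> dom t" and "\<not> prefix u w"
    by (simp_all add: dom_prune strict_prefix_snoc)
  then have "\<not> strict_prefix u w" by (auto simp: strict_prefix_def)
  then show "w \<in> dom (prune t u) \<and> 1 \<le> i \<and> (\<forall>j\<in>{1..i}. w @ [j] \<in> dom (prune t u))"
    using is_treeD[OF assms wi] \<open>\<not> prefix u w\<close> by (simp add: dom_prune strict_prefix_snoc)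
qed

lemma is_leaf_prune: "is_leaf (prune t u) u"
  by (simp add: is_leaf_def dom_prune strict_prefix_snoc)

lemma prune_Nil [simp]: "prune t u [] = t []"
  and prune_self [simp]: "prune t u u = t u"
  by (simp_all add: prune_eq strict_prefix_def)

lemma is_tree_fringe:
  assumes "is_tree K t" "u \<in> dom t"
  shows "is_tree K (fringe t u)"
proof (rule is_treeI)
  have "finite ((@) u -` dom t)"
    using is_tree_finite[OF assms(1)] by (intro finite_vimageI) (auto intro: injI)
  moreover have "dom (fringe t u) = (@) u -` dom t" by (auto simp: fringe_def)
  ultimately show "finite (dom (fringe t u))" by simp
  show "[] \<in> dom (fringe t u)" using assms(2) by (simp add: fringe_def domIff)
  show "ran (fringe t u) \<subseteq> {1..K}"
    using is_tree_ran[OF assms(1)] by (auto simp: ran_def fringe_def)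
  fix w i assume "w @ [i] \<in> dom (fringe t u)"
  then show "w \<in> dom (fringe t u) \<and> 1 \<le> i \<and> (\<forall>j\<in>{1..i}. w @ [j] \<in> dom (fringe t u))"
    using is_treeD[OF assms(1), of "u @ w" i] by (simp add: fringe_def domIff)
qed

lemma fringe_Nil [simp]: "fringe t u [] = t u"
  by (simp add: fringe_def)

definition graft :: "ttree \<Rightarrow> nat list \<Rightarrow> ttree \<Rightarrow> ttree" where
  "graft p v s = (\<lambda>w. if prefix v w then s (drop (length v) w) else p w)"

lemma graft_append [simp]: "graft p v s (v @ z) = s z"
  by (simp add: graft_def)

lemma graft_self [simp]: "graft p v s v = s []"
  by (simp add: graft_def)

lemma graft_not_prefix: "\<not> prefix v w \<Longrightarrow> graft p v s w = p w"
  by (simp add: graft_def)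

lemma fringe_graft [simp]: "fringe (graft p v s) v = s"
  by (simp add: fringe_def graft_def)

lemma graft_prune_fringe [simp]: "graft (prune t u) u (fringe t u) = t"
proof
  fix w show "graft (prune t u) u (fringe t u) w = t w"
    by (cases "prefix u w") (auto simp: graft_def fringe_def prune_eq strict_prefix_def prefix_def)
qed

definition offspring_weight :: "(nat \<Rightarrow> nat list pmf) \<Rightarrow> ttree \<Rightarrow> nat list set \<Rightarrow> real" where
  "offspring_weight \<zeta> t A = (\<Prod>u\<in>A. pmf (\<zeta> (the (t u))) (childtypes t u))"

lemma offspring_weight_nonneg: "0 \<le> offspring_weight \<zeta> t A"
  by (simp add: offspring_weight_def prod_nonneg)

locale leaf_graft =
  fixes K :: nat and p s :: ttree and v :: "nat list"
  assumes is_tree_p: "is_tree K p" and v_in_p: "v \<in> dom p" and leaf: "is_leaf p v"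
    and is_tree_s: "is_tree K s" and root_s: "s [] = p v"
begin

lemma prefix_in_dom: "w \<in> dom p \<Longrightarrow> prefix v w \<longleftrightarrow> w = v"
  using is_leaf_extension[OF is_tree_p leaf] by (auto simp: prefix_def)

lemma graft_on_dom: "w \<in> dom p \<Longrightarrow> graft p v s w = p w"
  using prefix_in_dom root_s by (auto simp: graft_def)

lemma dom_graft: "dom (graft p v s) = (dom p - {v}) \<union> (@) v ` dom s"
proof (intro equalityI subsetI)
  fix w assume w: "w \<in> dom (graft p v s)"
  show "w \<in> (dom p - {v}) \<union> (@) v ` dom s"
  proof (cases "prefix v w")
    case True
    then obtain z where "w = v @ z" by (auto simp: prefix_def)
    then show ?thesis using w by auto
  next
    case False
    then show ?thesis using w by (auto simp: graft_not_prefix)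
  qed
next
  fix w assume "w \<in> (dom p - {v}) \<union> (@) v ` dom s"
  then consider "w \<in> dom p" | z where "z \<in> dom s" "w = v @ z" by blast
  then show "w \<in> dom (graft p v s)" by cases (simp_all add: graft_on_dom domIff)
qed

lemma dom_subset_graft: "dom p \<subseteq> dom (graft p v s)"
proof
  fix w assume "w \<in> dom p"
  then show "w \<in> dom (graft p v s)" by (simp add: graft_on_dom domIff)
qed

lemma graft_Nil [simp]: "graft p v s [] = p []"
  by (rule graft_on_dom) (rule is_tree_Nil[OF is_tree_p])

lemma is_tree_graft: "is_tree K (graft p v s)"
proof (rule is_treeI)
  show "finite (dom (graft p v s))"
    using is_tree_finite[OF is_tree_p] is_tree_finite[OF is_tree_s] unfolding dom_graft by simp
  show "[] \<in> dom (graft p v s)" using is_tree_Nil[OF is_tree_p] dom_subset_graft by blast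
  have "ran (graft p v s) \<subseteq> ran p \<union> ran s" by (auto simp: ran_def graft_def)
  then show "ran (graft p v s) \<subseteq> {1..K}" using is_tree_ran[OF is_tree_p] is_tree_ran[OF is_tree_s] by blast
  fix w i assume wi: "w @ [i] \<in> dom (graft p v s)"
  show "w \<in> dom (graft p v s) \<and> 1 \<le> i \<and> (\<forall>j\<in>{1..i}. w @ [j] \<in> dom (graft p v s))"
  proof (cases "prefix v w")
    case True
    then obtain z where w: "w = v @ z" by (auto simp: prefix_def)
    then have "z @ [i] \<in> dom s" using wi by (simp add: domIff)
    then have "z \<in> dom s" "1 \<le> i" "\<forall>j\<in>{1..i}. z @ [j] \<in> dom s"
      using is_treeD[OF is_tree_s] by blast+
    moreover have "y \<in> dom s \<Longrightarrow> v @ y \<in> dom (graft p v s)" for y by (simp add: domIff)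
    ultimately show ?thesis unfolding w by simp
  next
    case False
    have "w @ [i] \<in> dom p"
    proof (cases "prefix v (w @ [i])")
      case True
      then show ?thesis using False v_in_p by simp
    next
      case False
      then show ?thesis using wi by (simp add: graft_not_prefix domIff)
    qed
    then have "w \<in> dom p" "1 \<le> i" "\<forall>j\<in>{1..i}. w @ [j] \<in> dom p"
      using is_treeD[OF is_tree_p] by blast+
    then show ?thesis using dom_subset_graft by blast
  qed
qed

lemma prune_graft [simp]: "prune (graft p v s) v = p"
proof
  fix w show "prune (graft p v s) v w = p w"
  proof (cases "strict_prefix v w")
    case True
    then obtain z where "w = v @ z" "z \<noteq> []" by (auto simp: strict_prefix_def prefix_def)
    then show ?thesis using is_leaf_extension[OF is_tree_p leaf] True by (auto simp: prune_eq domIff)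
  next
    case not_strict: False
    show ?thesis
    proof (cases "w = v")
      case True
      then show ?thesis using root_s by (simp add: prune_eq strict_prefix_def)
    next
      case False
      then have "\<not> prefix v w" using not_strict by (simp add: strict_prefix_def)
      then show ?thesis using not_strict by (simp add: prune_eq graft_not_prefix)
    qed
  qed
qed

lemma offspring_weight_graft:
  "offspring_weight \<zeta> (graft p v s) (dom (graft p v s))
     = offspring_weight \<zeta> p (dom p - {v}) * offspring_weight \<zeta> s (dom s)"
proof -
  have "v @ z \<notin> dom p - {v}" for z using prefix_in_dom[of "v @ z"] by auto
  then have disj: "(dom p - {v}) \<inter> (@) v ` dom s = {}" by blast
  have fin: "finite (dom p - {v})" "finite ((@) v ` dom s)"
    using is_tree_finite[OF is_tree_p] is_tree_finite[OF is_tree_s] by simp_all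
  have on_p: "offspring_weight \<zeta> (graft p v s) (dom p - {v}) = offspring_weight \<zeta> p (dom p - {v})"
    unfolding offspring_weight_def
  proof (rule prod.cong[OF refl])
    fix w assume w: "w \<in> dom p - {v}"
    have "graft p v s (w @ [i]) = p (w @ [i])" for i
    proof (cases "prefix v (w @ [i])")
      case True
      then have "v = w @ [i]" using w prefix_in_dom by auto
      then show ?thesis using root_s by simp
    qed (simp add: graft_not_prefix)
    then have "childtypes (graft p v s) w = childtypes p w" by (rule childtypes_cong)
    then show "pmf (\<zeta> (the (graft p v s w))) (childtypes (graft p v s) w)
        = pmf (\<zeta> (the (p w))) (childtypes p w)"
      using w graft_on_dom by simp
  qed
  have on_s: "offspring_weight \<zeta> (graft p v s) ((@) v ` dom s) = offspring_weight \<zeta> s (dom s)"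
  proof -
    have "childtypes (graft p v s) (v @ z) = childtypes s z" for z
      by (rule childtypes_cong) (metis append_assoc graft_append)
    then show ?thesis unfolding offspring_weight_def by (simp add: prod.reindex inj_on_def)
  qed
  have "offspring_weight \<zeta> (graft p v s) (dom (graft p v s))
      = offspring_weight \<zeta> (graft p v s) (dom p - {v})
        * offspring_weight \<zeta> (graft p v s) ((@) v ` dom s)"
    unfolding dom_graft offspring_weight_def by (rule prod.union_disjoint[OF fin disj])
  then show ?thesis using on_p on_s by simp
qed

end

section \<open>Galton--Watson and size-biased weights\<close>

lemma gw_nonneg: "0 \<le> gw K \<zeta> i t"
  by (simp add: gw_def prod_nonneg)

lemma gw_eq_0: "\<not> (is_tree K t \<and> t [] = Some i) \<Longrightarrow> gw K \<zeta> i t = 0"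
  unfolding gw_def by (rule if_not_P)

lemma gw_eq_offspring_weight:
  "is_tree K t \<Longrightarrow> t [] = Some i \<Longrightarrow> gw K \<zeta> i t = offspring_weight \<zeta> t (dom t)"
  by (simp add: gw_def offspring_weight_def)

lemma sb_mass_eq_0:
  "\<not> (is_tree K t \<and> t [] = Some i \<and> v \<in> dom t \<and> length v = h \<and> is_leaf t v)
     \<Longrightarrow> sb_mass K \<zeta> b i h t v = 0"
  unfolding sb_mass_def is_leaf_def by (rule if_not_P)

lemma prod_spine_size_biased:
  fixes b :: "nat \<Rightarrow> real"
  assumes p: "is_tree K p" and v: "v \<in> dom p" and b: "\<forall>k\<in>{1..K}. b k > 0"
    and "n \<le> length v"
  defines "e \<equiv> \<lambda>u. the (p u)"
  shows "(\<Prod>k<n. zeta_hat \<zeta> b (e (take k v)) (childtypes p (take k v))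
            * (b (e (take (Suc k) v)) / sum_list (map b (childtypes p (take k v)))))
       = b (e (take n v)) / b (e []) * (\<Prod>k<n. pmf (\<zeta> (e (take k v))) (childtypes p (take k v)))"
proof -
  define f where "f k = zeta_hat \<zeta> b (e (take k v)) (childtypes p (take k v))
    * (b (e (take (Suc k) v)) / sum_list (map b (childtypes p (take k v))))" for k
  define g where "g k = pmf (\<zeta> (e (take k v))) (childtypes p (take k v))" for k
  have in_p: "take k v \<in> dom p" for k using is_tree_prefix_closed[OF p v] take_is_prefix by blast
  have pos: "b (e (take k v)) > 0" for k using b is_tree_type_range[OF p in_p] by (simp add: e_def)
  have "(\<Prod>k<n. f k) = b (e (take n v)) / b (e []) * (\<Prod>k<n. g k)"
    using \<open>n \<le> length v\<close>
  proof (induction n)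
    case 0
    show ?case using pos[of 0] by simp
  next
    case (Suc n)
    let ?u = "take n v" and ?u' = "take (Suc n) v"
    have "?u' = ?u @ [v ! n]" using Suc.prems by (simp add: take_Suc_conv_app_nth)
    then have "e ?u' \<in> set (childtypes p ?u)"
      using in_p[of "Suc n"] unfolding set_childtypes[OF p] e_def by auto
    moreover have "\<forall>y\<in>set (map b (childtypes p ?u)). 0 \<le> y"
      using childtypes_subset[OF p, of ?u] b by fastforce
    ultimately have "b (e ?u') \<le> sum_list (map b (childtypes p ?u))"
      by (intro member_le_sum_list) auto
    then have "sum_list (map b (childtypes p ?u)) > 0" using pos[of "Suc n"] by linarith
    then have fn: "f n = b (e ?u') / b (e ?u) * g n"
      unfolding f_def g_def zeta_hat_def by (simp add: field_simps)
    have "(\<Prod>k<Suc n. f k) = b (e ?u) / b (e []) * (\<Prod>k<n. g k) * (b (e ?u') / b (e ?u) * g n)"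
      using Suc fn by simp
    also have "\<dots> = b (e ?u') / b (e []) * (\<Prod>k<Suc n. g k)"
      using pos[of n] by (simp add: field_simps)
    finally show ?case .
  qed
  then show ?thesis by (simp add: f_def g_def)
qed

lemma strict_prefixes_eq_take: "{u. strict_prefix u v} = (\<lambda>k. take k v) ` {..<length v}"
proof (intro equalityI subsetI)
  fix u assume "u \<in> {u. strict_prefix u v}"
  then obtain z where "v = u @ z" "z \<noteq> []" by (auto simp: strict_prefix_def prefix_def)
  then show "u \<in> (\<lambda>k. take k v) ` {..<length v}" by (intro image_eqI[of _ _ "length u"]) auto
next
  fix u assume "u \<in> (\<lambda>k. take k v) ` {..<length v}"
  then show "u \<in> {u. strict_prefix u v}" by (auto simp: strict_prefix_def take_is_prefix take_all_iff)
qed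

lemma dom_minus_leaf_spine:
  assumes "is_tree K p" "v \<in> dom p"
  shows "dom p - {v} = (\<lambda>k. take k v) ` {..<length v} \<union> {u \<in> dom p. \<not> prefix u v}"
proof -
  have "{u. strict_prefix u v} \<subseteq> dom p"
    using is_tree_prefix_closed[OF assms] by (auto simp: strict_prefix_def)
  then show ?thesis unfolding strict_prefixes_eq_take[symmetric] by (auto simp: strict_prefix_def)
qed

lemma sb_mass_leaf:
  fixes b :: "nat \<Rightarrow> real"
  assumes p: "is_tree K p" "p [] = Some i" and v: "v \<in> dom p" "is_leaf p v"
    and b: "\<forall>k\<in>{1..K}. b k > 0"
  shows "sb_mass K \<zeta> b i (length v) p v = b (the (p v)) / b i * offspring_weight \<zeta> p (dom p - {v})"
proof -
  have "offspring_weight \<zeta> p (dom p - {v})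
      = offspring_weight \<zeta> p ((\<lambda>k. take k v) ` {..<length v})
        * offspring_weight \<zeta> p {u \<in> dom p. \<not> prefix u v}"
    unfolding dom_minus_leaf_spine[OF p(1) v(1)] offspring_weight_def
    using is_tree_finite[OF p(1)] by (intro prod.union_disjoint) (auto simp: take_is_prefix)
  also have "offspring_weight \<zeta> p ((\<lambda>k. take k v) ` {..<length v})
      = (\<Prod>k<length v. pmf (\<zeta> (the (p (take k v)))) (childtypes p (take k v)))"
    unfolding offspring_weight_def by (subst prod.reindex) (auto simp: inj_on_def dest: arg_cong[of _ _ length])
  finally show ?thesis
    using prod_spine_size_biased[OF p(1) v(1) b, of "length v" \<zeta>] p v
    by (simp add: sb_mass_def is_leaf_def offspring_weight_def)
qed

context leaf_graft
begin

lemma size_biased_graft_weight: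
  fixes b :: "nat \<Rightarrow> real"
  assumes "p [] = Some i" and "\<forall>k\<in>{1..K}. b k > 0"
  shows "b i * sb_mass K \<zeta> b i (length v) p v * gw K \<zeta> (the (p v)) s
       = b (the (p v)) * gw K \<zeta> i (graft p v s)"
proof -
  have "b i > 0" using assms is_tree_type_range[OF is_tree_p is_tree_Nil[OF is_tree_p]] by auto
  moreover have "gw K \<zeta> (the (p v)) s = offspring_weight \<zeta> s (dom s)"
    using is_tree_s root_s v_in_p by (auto simp: gw_eq_offspring_weight)
  moreover have "gw K \<zeta> i (graft p v s) = offspring_weight \<zeta> p (dom p - {v}) * offspring_weight \<zeta> s (dom s)"
    using is_tree_graft assms(1) by (simp add: gw_eq_offspring_weight offspring_weight_graft)
  ultimately show ?thesis
    using sb_mass_leaf[OF is_tree_p assms(1) v_in_p leaf assms(2)] by simp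
qed

lemma ennreal_size_biased_graft_weight:
  fixes b :: "nat \<Rightarrow> real"
  assumes root: "p [] = Some i" and b: "\<forall>k\<in>{1..K}. b k > 0"
  shows "ennreal (b i) * ennreal (sb_mass K \<zeta> b i (length v) p v) * (ennreal (gw K \<zeta> (the (p v)) s) * y)
           / ennreal (b (the (p v)))
       = ennreal (gw K \<zeta> i (graft p v s)) * y"
proof -
  let ?e = "the (p v)" and ?sb = "sb_mass K \<zeta> b i (length v) p v"
  have "b ?e > 0" "b i > 0"
    using b is_tree_type_range[OF is_tree_p v_in_p]
      is_tree_type_range[OF is_tree_p is_tree_Nil[OF is_tree_p]] root by auto
  then have "?sb \<ge> 0"
    using sb_mass_leaf[OF is_tree_p root v_in_p leaf b] offspring_weight_nonneg by simp
  then have "ennreal (b i) * ennreal ?sb * ennreal (gw K \<zeta> ?e s)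
      = ennreal (gw K \<zeta> i (graft p v s)) * ennreal (b ?e)"
    using size_biased_graft_weight[OF root b, of \<zeta>] \<open>b i > 0\<close> \<open>b ?e > 0\<close>
    by (simp add: ennreal_mult'[symmetric] gw_nonneg mult.commute)
  then have "ennreal (b i) * ennreal ?sb * (ennreal (gw K \<zeta> ?e s) * y)
      = ennreal (gw K \<zeta> i (graft p v s)) * y * ennreal (b ?e)"
    by (simp add: mult_ac)
  then show ?thesis using \<open>b ?e > 0\<close> by (simp add: mult_divide_eq_ennreal)
qed

end

section \<open>The many-to-one formula for a single tree\<close>

lemma bij_betw_graft:
  "bij_betw (\<lambda>((p, v), s). (graft p v s, v))
     {((p, v), s). leaf_graft K p s v \<and> p [] = Some i}
     {(t, u). is_tree K t \<and> t [] = Some i \<and> u \<in> dom t}"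
  (is "bij_betw ?f ?A ?B")
proof (rule bij_betw_byWitness[where f' = "\<lambda>(t, u). ((prune t u, u), fringe t u)"])
  have "?f z \<in> ?B \<and> (\<lambda>(t, u). ((prune t u, u), fringe t u)) (?f z) = z" if "z \<in> ?A" for z
  proof -
    obtain p v s where z: "z = ((p, v), s)" by (metis prod.collapse)
    with that have g: "leaf_graft K p s v" and root: "p [] = Some i" by auto
    interpret leaf_graft K p s v by (fact g)
    have "v \<in> dom (graft p v s)" using dom_subset_graft v_in_p by blast
    then show ?thesis using is_tree_graft root by (simp add: z)
  qed
  then show "\<forall>z\<in>?A. (\<lambda>(t, u). ((prune t u, u), fringe t u)) (?f z) = z" "?f ` ?A \<subseteq> ?B"
    by auto
  have "is_tree K t \<Longrightarrow> u \<in> dom t \<Longrightarrow> leaf_graft K (prune t u) (fringe t u) u" for t u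
    by (simp add: leaf_graft_def is_tree_prune is_leaf_prune is_tree_fringe domIff)
  then show "(\<lambda>(t, u). ((prune t u, u), fringe t u)) ` ?B \<subseteq> ?A" by auto
qed simp

lemma infsum_gw_sum_dom:
  fixes f :: "ttree \<Rightarrow> nat list \<Rightarrow> ennreal"
  shows "(\<Sum>\<^sub>\<infinity>t. ennreal (gw K \<zeta> i t) * (\<Sum>u\<in>dom t. f t u))
       = (\<Sum>\<^sub>\<infinity>(t, u)\<in>{(t, u). is_tree K t \<and> t [] = Some i \<and> u \<in> dom t}. ennreal (gw K \<zeta> i t) * f t u)"
proof -
  let ?T = "{t. is_tree K t \<and> t [] = Some i}"
  have "(\<Sum>\<^sub>\<infinity>t. ennreal (gw K \<zeta> i t) * (\<Sum>u\<in>dom t. f t u))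
      = (\<Sum>\<^sub>\<infinity>t\<in>?T. ennreal (gw K \<zeta> i t) * (\<Sum>u\<in>dom t. f t u))"
    by (rule infsum_cong_neutral) (auto simp: gw_eq_0)
  also have "\<dots> = (\<Sum>\<^sub>\<infinity>t\<in>?T. \<Sum>\<^sub>\<infinity>u\<in>dom t. ennreal (gw K \<zeta> i t) * f t u)"
    by (rule infsum_cong) (auto simp: sum_distrib_left dest: is_tree_finite)
  also have "\<dots> = (\<Sum>\<^sub>\<infinity>(t, u)\<in>Sigma ?T dom. ennreal (gw K \<zeta> i t) * f t u)"
    by (simp add: infsum_Sigma_ennreal)
  also have "Sigma ?T dom = {(t, u). is_tree K t \<and> t [] = Some i \<and> u \<in> dom t}"
    by auto
  finally show ?thesis .
qed

lemma suminf_sb_mass_height: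
  fixes F :: "ttree \<Rightarrow> nat list \<Rightarrow> ennreal"
  shows "(\<Sum>h. \<Sum>\<^sub>\<infinity>(p, v). ennreal (sb_mass K \<zeta> b i h p v) * F p v)
       = (\<Sum>\<^sub>\<infinity>(p, v). ennreal (sb_mass K \<zeta> b i (length v) p v) * F p v)"
proof -
  have "(\<Sum>\<^sub>\<infinity>h. ennreal (sb_mass K \<zeta> b i h p v) * F p v)
      = ennreal (sb_mass K \<zeta> b i (length v) p v) * F p v" for p v
  proof -
    have "(\<Sum>\<^sub>\<infinity>h. ennreal (sb_mass K \<zeta> b i h p v) * F p v)
        = (\<Sum>\<^sub>\<infinity>h\<in>{length v}. ennreal (sb_mass K \<zeta> b i h p v) * F p v)"
      by (rule infsum_cong_neutral) (auto simp: sb_mass_eq_0)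
    then show ?thesis by simp
  qed
  then show ?thesis
    by (simp add: suminf_eq_infsum_ennreal infsum_swap_ennreal[of _ UNIV] case_prod_unfold)
qed

lemma gw_many_to_one:
  fixes b :: "nat \<Rightarrow> real" and H :: "nat list \<Rightarrow> ttree \<Rightarrow> ttree \<Rightarrow> ennreal"
  assumes b: "\<forall>k\<in>{1..K}. b k > 0"
  shows "(\<Sum>\<^sub>\<infinity>t. ennreal (gw K \<zeta> i t) * (\<Sum>u\<in>dom t. H u (prune t u) (fringe t u)))
       = ennreal (b i) * (\<Sum>h. \<Sum>\<^sub>\<infinity>(p, v). ennreal (sb_mass K \<zeta> b i h p v)
            * (\<Sum>\<^sub>\<infinity>s. ennreal (gw K \<zeta> (the (p v)) s) * H v p s) / ennreal (b (the (p v))))"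
proof -
  define R where "R = (\<lambda>((p, v), s). ennreal (b i) * ennreal (sb_mass K \<zeta> b i (length v) p v)
      * (ennreal (gw K \<zeta> (the (p v)) s) * H v p s) / ennreal (b (the (p v))))"
  define L where "L = (\<lambda>(t, u). ennreal (gw K \<zeta> i t) * H u (prune t u) (fringe t u))"
  define S where "S = {((p, v), s). leaf_graft K p s v \<and> p [] = Some i}"
  have R_eq_0: "R z = 0" if "z \<notin> S" for z
  proof -
    obtain p v s where z: "z = ((p, v), s)" by (metis prod.collapse)
    show ?thesis
    proof (cases "is_tree K p \<and> p [] = Some i \<and> v \<in> dom p \<and> is_leaf p v")
      case True
      then have "\<not> (is_tree K s \<and> s [] = Some (the (p v)))"
        using that by (auto simp: z S_def leaf_graft_def)
      then show ?thesis by (simp add: z R_def gw_eq_0)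
    next
      case False
      then show ?thesis by (simp add: z R_def sb_mass_eq_0)
    qed
  qed
  have "ennreal (b i) * (\<Sum>h. \<Sum>\<^sub>\<infinity>(p, v). ennreal (sb_mass K \<zeta> b i h p v)
            * (\<Sum>\<^sub>\<infinity>s. ennreal (gw K \<zeta> (the (p v)) s) * H v p s) / ennreal (b (the (p v))))
      = ennreal (b i) * (\<Sum>\<^sub>\<infinity>(p, v). ennreal (sb_mass K \<zeta> b i (length v) p v)
            * ((\<Sum>\<^sub>\<infinity>s. ennreal (gw K \<zeta> (the (p v)) s) * H v p s) / ennreal (b (the (p v)))))"
    by (simp only: ennreal_times_divide[symmetric] suminf_sb_mass_height)
  also have "\<dots> = (\<Sum>\<^sub>\<infinity>z. \<Sum>\<^sub>\<infinity>s. R (z, s))"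
    by (simp add: R_def case_prod_unfold infsum_cmult_ennreal infsum_divide_ennreal ennreal_times_divide
        mult.assoc)
  also have "\<dots> = infsum R UNIV"
    by (simp add: infsum_Sigma_ennreal[of R UNIV "\<lambda>_. UNIV", simplified])
  also have "\<dots> = infsum R S"
    using R_eq_0 by (intro infsum_cong_neutral) auto
  also have "\<dots> = (\<Sum>\<^sub>\<infinity>((p, v), s)\<in>S. ennreal (gw K \<zeta> i (graft p v s)) * H v p s)"
    by (rule infsum_cong)
      (auto simp: S_def R_def leaf_graft.ennreal_size_biased_graft_weight[OF _ _ b])
  also have "\<dots> = (\<Sum>\<^sub>\<infinity>z\<in>S. L ((\<lambda>((p, v), s). (graft p v s, v)) z))"
    by (rule infsum_cong) (auto simp: S_def L_def leaf_graft.prune_graft)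
  also have "\<dots> = infsum L {(t, u). is_tree K t \<and> t [] = Some i \<and> u \<in> dom t}"
    unfolding S_def by (rule infsum_reindex_bij_betw[OF bij_betw_graft, where f = L])
  finally show ?thesis unfolding infsum_gw_sum_dom L_def by (rule sym)
qed

section \<open>Forests\<close>

lemma forest_of_Cons:
  "forest_of ts (k # u) = (if 1 \<le> k \<and> k \<le> length ts then (ts ! (k - 1)) u else None)"
  by (simp add: forest_of_def)

lemma dom_forest_of:
  "dom (forest_of ts) = (\<lambda>(j, u). j # u) ` Sigma {1..length ts} (\<lambda>j. dom (ts ! (j - 1)))"
proof (intro equalityI subsetI)
  fix w assume w: "w \<in> dom (forest_of ts)"
  then obtain k u where "w = k # u" by (cases w) (auto simp: forest_of_def)
  with w show "w \<in> (\<lambda>(j, u). j # u) ` Sigma {1..length ts} (\<lambda>j. dom (ts ! (j - 1)))"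
    by (auto simp: forest_of_Cons domIff split: if_splits)
qed (auto simp: forest_of_Cons domIff)

lemma sum_dom_forest_of:
  assumes "\<And>t. t \<in> set ts \<Longrightarrow> finite (dom t)"
  shows "(\<Sum>w\<in>dom (forest_of ts). f w) = (\<Sum>j=1..length ts. \<Sum>u\<in>dom (ts ! (j - 1)). f (j # u))"
proof -
  have "inj_on (\<lambda>(j, u). j # u) (Sigma {1..length ts} (\<lambda>j. dom (ts ! (j - 1))))"
    by (auto simp: inj_on_def)
  then have "(\<Sum>w\<in>dom (forest_of ts). f w) = (\<Sum>(j, u)\<in>Sigma {1..length ts} (\<lambda>j. dom (ts ! (j - 1))). f (j # u))"
    unfolding dom_forest_of by (simp add: sum.reindex case_prod_unfold)
  also have "\<dots> = (\<Sum>j=1..length ts. \<Sum>u\<in>dom (ts ! (j - 1)). f (j # u))"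
    using assms by (intro sum.Sigma[symmetric]) auto
  finally show ?thesis .
qed

lemma prune_forest_of:
  assumes "1 \<le> j" "j \<le> length ts"
  shows "prune (forest_of ts) (j # u) = forest_of (ts[j - 1 := prune (ts ! (j - 1)) u])"
proof
  fix w show "prune (forest_of ts) (j # u) w = forest_of (ts[j - 1 := prune (ts ! (j - 1)) u]) w"
  proof (cases w)
    case (Cons k w')
    then show ?thesis using assms
      by (cases "k = j") (auto simp: prune_def forest_of_Cons nth_list_update)
  qed (simp add: prune_def forest_of_def)
qed

lemma fringe_forest_of:
  "1 \<le> j \<Longrightarrow> j \<le> length ts \<Longrightarrow> fringe (forest_of ts) (j # u) = fringe (ts ! (j - 1)) u"
  by (simp add: fringe_def forest_of_Cons)

lemma infsum_list_update_ennreal: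
  fixes f :: "'a list \<Rightarrow> ennreal"
  assumes "J < n"
  shows "(\<Sum>\<^sub>\<infinity>ts\<in>{ts. length ts = n}. f ts)
       = (\<Sum>\<^sub>\<infinity>ts\<in>{ts. length ts = n \<and> ts ! J = t\<^sub>0}. \<Sum>\<^sub>\<infinity>t. f (ts[J := t]))"
proof -
  have "(\<Sum>\<^sub>\<infinity>ts\<in>{ts. length ts = n}. f ts)
      = (\<Sum>\<^sub>\<infinity>(ts, t)\<in>{ts. length ts = n \<and> ts ! J = t\<^sub>0} \<times> UNIV. f (ts[J := t]))"
    by (rule infsum_reindex_bij_witness[where j = "\<lambda>ts. (ts[J := t\<^sub>0], ts ! J)"
          and i = "\<lambda>(ts, t). ts[J := t]"]) (use assms in auto)
  then show ?thesis by (simp add: infsum_Sigma_ennreal)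
qed

lemma prod_lessThan_list_update:
  fixes f :: "nat \<Rightarrow> 'a \<Rightarrow> 'b :: comm_monoid_mult"
  assumes "J < length ts"
  shows "(\<Prod>l<length ts. f l (ts[J := t] ! l)) = f J t * (\<Prod>l\<in>{..<length ts} - {J}. f l (ts ! l))"
  using assms by (simp add: prod.remove[of "{..<length ts}" J])

definition gw_except :: "nat \<Rightarrow> (nat \<Rightarrow> nat list pmf) \<Rightarrow> nat list \<Rightarrow> nat \<Rightarrow> ttree list \<Rightarrow> real" where
  "gw_except K \<zeta> x J ts = (\<Prod>l\<in>{..<length x} - {J}. gw K \<zeta> (x ! l) (ts ! l))"

lemma gw_except_nonneg: "0 \<le> gw_except K \<zeta> x J ts"
  by (simp add: gw_except_def prod_nonneg gw_nonneg)

lemma gw_except_list_update [simp]: "gw_except K \<zeta> x J (ts[J := t]) = gw_except K \<zeta> x J ts"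
  by (simp add: gw_except_def)

lemma forest_weight_list_update:
  assumes "length ts = length x" "J < length x"
  shows "(\<Prod>l<length x. gw K \<zeta> (x ! l) (ts[J := t] ! l)) = gw K \<zeta> (x ! J) t * gw_except K \<zeta> x J ts"
  using prod_lessThan_list_update[of J ts "\<lambda>l. gw K \<zeta> (x ! l)" t] assms
  by (simp add: gw_except_def)

lemma forest_weight_sum_dom:
  assumes "length ts = length x"
  shows "ennreal (\<Prod>l<length x. gw K \<zeta> (x ! l) (ts ! l)) * (\<Sum>w\<in>dom (forest_of ts). f w)
       = (\<Sum>j=1..length x. ennreal (\<Prod>l<length x. gw K \<zeta> (x ! l) (ts ! l))
            * (\<Sum>u\<in>dom (ts ! (j - 1)). f (j # u)))"
proof (cases "\<forall>t\<in>set ts. finite (dom t)")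
  case True
  then show ?thesis using assms by (simp add: sum_dom_forest_of sum_distrib_left)
next
  case False
  then obtain l where "l < length x" "\<not> finite (dom (ts ! l))"
    using assms by (auto simp: in_set_conv_nth)
  then have "gw K \<zeta> (x ! l) (ts ! l) = 0" using is_tree_finite by (blast intro: gw_eq_0)
  then have zero: "(\<Prod>l<length x. gw K \<zeta> (x ! l) (ts ! l)) = 0"
    using \<open>l < length x\<close> by (intro prod_zero) auto
  show ?thesis unfolding zero by simp
qed

context
  fixes K :: nat and \<zeta> :: "nat \<Rightarrow> nat list pmf" and b :: "nat \<Rightarrow> real" and x :: "nat list" and j :: nat
  assumes j: "1 \<le> j" "j \<le> length x"
begin

text \<open>Below, the \<open>j\<close>-th component is summed over separately; \<open>Map.empty\<close> is only a placeholder
  for it.\<close>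

lemma E_hat_list_update:
  "E_hat K \<zeta> b x j h G
     = (\<Sum>\<^sub>\<infinity>ts\<in>{ts. length ts = length x \<and> ts ! (j - 1) = Map.empty}.
          ennreal (gw_except K \<zeta> x (j - 1) ts)
          * (\<Sum>\<^sub>\<infinity>(p, v). ennreal (sb_mass K \<zeta> b (x ! (j - 1)) h p v) * G (j # v) (forest_of (ts[j - 1 := p]))))"
proof -
  have "E_hat K \<zeta> b x j h G = (\<Sum>\<^sub>\<infinity>ts\<in>{ts. length ts = length x}. \<Sum>\<^sub>\<infinity>v.
      ennreal (gw_except K \<zeta> x (j - 1) ts * sb_mass K \<zeta> b (x ! (j - 1)) h (ts ! (j - 1)) v)
      * G (j # v) (forest_of ts))"
    by (simp add: E_hat_def gw_except_def infsum_Sigma_ennreal)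
  also have "\<dots> = (\<Sum>\<^sub>\<infinity>ts\<in>{ts. length ts = length x \<and> ts ! (j - 1) = Map.empty}. \<Sum>\<^sub>\<infinity>p. \<Sum>\<^sub>\<infinity>v.
      ennreal (gw_except K \<zeta> x (j - 1) ts) * (ennreal (sb_mass K \<zeta> b (x ! (j - 1)) h p v)
      * G (j # v) (forest_of (ts[j - 1 := p]))))"
    using j by (subst infsum_list_update_ennreal[of "j - 1"])
      (auto intro!: infsum_cong simp: ennreal_mult' gw_except_nonneg mult.assoc)
  also have "\<dots> = (\<Sum>\<^sub>\<infinity>ts\<in>{ts. length ts = length x \<and> ts ! (j - 1) = Map.empty}.
          ennreal (gw_except K \<zeta> x (j - 1) ts)
          * (\<Sum>\<^sub>\<infinity>(p, v). ennreal (sb_mass K \<zeta> b (x ! (j - 1)) h p v) * G (j # v) (forest_of (ts[j - 1 := p]))))"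
    by (simp add: infsum_cmult_ennreal infsum_Sigma_ennreal[of _ UNIV "\<lambda>_. UNIV", simplified])
  finally show ?thesis .
qed

lemma E_forest_component_list_update:
  "(\<Sum>\<^sub>\<infinity>ts\<in>{ts. length ts = length x}. ennreal (\<Prod>l<length x. gw K \<zeta> (x ! l) (ts ! l))
      * (\<Sum>u\<in>dom (ts ! (j - 1)). G1 (j # u) (prune (forest_of ts) (j # u)) * G2 (fringe (forest_of ts) (j # u))))
   = (\<Sum>\<^sub>\<infinity>ts\<in>{ts. length ts = length x \<and> ts ! (j - 1) = Map.empty}.
        ennreal (gw_except K \<zeta> x (j - 1) ts) * (\<Sum>\<^sub>\<infinity>t. ennreal (gw K \<zeta> (x ! (j - 1)) t)
          * (\<Sum>u\<in>dom t. G1 (j # u) (forest_of (ts[j - 1 := prune t u])) * G2 (fringe t u))))"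
proof -
  have "ennreal (\<Prod>l<length x. gw K \<zeta> (x ! l) (ts[j - 1 := t] ! l))
      * (\<Sum>u\<in>dom (ts[j - 1 := t] ! (j - 1)). G1 (j # u) (prune (forest_of (ts[j - 1 := t])) (j # u))
          * G2 (fringe (forest_of (ts[j - 1 := t])) (j # u)))
    = ennreal (gw_except K \<zeta> x (j - 1) ts) * (ennreal (gw K \<zeta> (x ! (j - 1)) t)
      * (\<Sum>u\<in>dom t. G1 (j # u) (forest_of (ts[j - 1 := prune t u])) * G2 (fringe t u)))"
    if "length ts = length x" for ts t
    using that j
    by (simp add: forest_weight_list_update prune_forest_of fringe_forest_of ennreal_mult gw_nonneg
        gw_except_nonneg mult_ac)
  then show ?thesis
    using j by (subst infsum_list_update_ennreal[of "j - 1"]) (auto intro!: infsum_cong simp: infsum_cmult_ennreal)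
qed

lemma E_forest_component:
  fixes G1 :: "nat list \<Rightarrow> ttree \<Rightarrow> ennreal" and G2 :: "ttree \<Rightarrow> ennreal"
  assumes b: "\<forall>k\<in>{1..K}. b k > 0"
  shows "(\<Sum>\<^sub>\<infinity>ts\<in>{ts. length ts = length x}. ennreal (\<Prod>l<length x. gw K \<zeta> (x ! l) (ts ! l))
      * (\<Sum>u\<in>dom (ts ! (j - 1)). G1 (j # u) (prune (forest_of ts) (j # u)) * G2 (fringe (forest_of ts) (j # u))))
   = ennreal (b (x ! (j - 1))) * (\<Sum>h. E_hat K \<zeta> b x j h
       (\<lambda>V F. G1 V F * E_tree K \<zeta> (the (F V)) G2 / ennreal (b (the (F V)))))"
proof -
  define T\<^sub>0 where "T\<^sub>0 = {ts :: ttree list. length ts = length x \<and> ts ! (j - 1) = Map.empty}"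
  define W where "W ts = ennreal (gw_except K \<zeta> x (j - 1) ts)" for ts
  define Y where "Y ts h = (\<Sum>\<^sub>\<infinity>(p, v). ennreal (sb_mass K \<zeta> b (x ! (j - 1)) h p v)
      * (G1 (j # v) (forest_of (ts[j - 1 := p])) * E_tree K \<zeta> (the (p v)) G2) / ennreal (b (the (p v))))"
    for ts h
  have "E_hat K \<zeta> b x j h (\<lambda>V F. G1 V F * E_tree K \<zeta> (the (F V)) G2 / ennreal (b (the (F V))))
      = (\<Sum>\<^sub>\<infinity>ts\<in>T\<^sub>0. W ts * Y ts h)" for h
    unfolding E_hat_list_update T\<^sub>0_def W_def Y_def using j
    by (auto intro!: infsum_cong simp: forest_of_Cons ennreal_times_divide mult.assoc)
  then have "ennreal (b (x ! (j - 1))) * (\<Sum>h. E_hat K \<zeta> b x j h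
       (\<lambda>V F. G1 V F * E_tree K \<zeta> (the (F V)) G2 / ennreal (b (the (F V)))))
    = (\<Sum>\<^sub>\<infinity>h. \<Sum>\<^sub>\<infinity>ts\<in>T\<^sub>0. ennreal (b (x ! (j - 1))) * (W ts * Y ts h))"
    by (simp add: suminf_eq_infsum_ennreal infsum_cmult_ennreal)
  also have "\<dots> = (\<Sum>\<^sub>\<infinity>ts\<in>T\<^sub>0. \<Sum>\<^sub>\<infinity>h. ennreal (b (x ! (j - 1))) * (W ts * Y ts h))"
    by (rule infsum_swap_ennreal)
  also have "\<dots> = (\<Sum>\<^sub>\<infinity>ts\<in>T\<^sub>0. W ts * (ennreal (b (x ! (j - 1))) * (\<Sum>h. Y ts h)))"
    by (simp add: suminf_eq_infsum_ennreal infsum_cmult_ennreal mult.left_commute)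
  also have "\<dots> = (\<Sum>\<^sub>\<infinity>ts\<in>T\<^sub>0. W ts * (\<Sum>\<^sub>\<infinity>t. ennreal (gw K \<zeta> (x ! (j - 1)) t)
          * (\<Sum>u\<in>dom t. G1 (j # u) (forest_of (ts[j - 1 := prune t u])) * G2 (fringe t u))))"
  proof (rule infsum_cong)
    fix ts
    have "(\<Sum>\<^sub>\<infinity>s. ennreal (gw K \<zeta> e s) * (G1 (j # v) (forest_of (ts[j - 1 := p])) * G2 s))
        = G1 (j # v) (forest_of (ts[j - 1 := p])) * E_tree K \<zeta> e G2" for e v p
      by (simp add: E_tree_def infsum_cmult_ennreal mult_ac)
    then show "W ts * (ennreal (b (x ! (j - 1))) * (\<Sum>h. Y ts h)) = W ts * (\<Sum>\<^sub>\<infinity>t. ennreal (gw K \<zeta> (x ! (j - 1)) t)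
          * (\<Sum>u\<in>dom t. G1 (j # u) (forest_of (ts[j - 1 := prune t u])) * G2 (fringe t u)))"
      using gw_many_to_one[OF b, of \<zeta> "x ! (j - 1)" "\<lambda>u p s. G1 (j # u) (forest_of (ts[j - 1 := p])) * G2 s"]
      by (simp add: Y_def)
  qed
  finally show ?thesis
    unfolding E_forest_component_list_update T\<^sub>0_def W_def by simp
qed

end

theorem lemma9:
  fixes K :: nat and \<zeta> :: "nat \<Rightarrow> nat list pmf" and a b :: "nat \<Rightarrow> real"
    and x :: "nat list" and G1 :: "nat list \<Rightarrow> ttree \<Rightarrow> ennreal" and G2 :: "ttree \<Rightarrow> ennreal"
  assumes "K \<ge> 1"
    and "\<forall>i\<in>{1..K}. set_pmf (\<zeta> i) \<subseteq> {w. set w \<subseteq> {1..K}}"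
    and "hypH K \<zeta>"
    and "\<forall>i\<in>{1..K}. b i > 0"
    and "\<forall>i\<in>{1..K}. (\<Sum>j=1..K. mentry \<zeta> i j * b j) = b i"
    and "\<forall>j\<in>{1..K}. (\<Sum>i=1..K. a i * mentry \<zeta> i j) = a j"
    and "(\<Sum>i=1..K. a i) = 1"
    and "(\<Sum>i=1..K. a i * b i) = 1"
    and "set x \<subseteq> {1..K}"
  shows "E_forest K \<zeta> x (\<lambda>F. \<Sum>v\<in>dom F. G1 v (prune F v) * G2 (fringe F v))
       = (\<Sum>j=1..length x. ennreal (b (x ! (j - 1)))
            * (\<Sum>h. E_hat K \<zeta> b x j h
                 (\<lambda>V F. G1 V F * E_tree K \<zeta> (the (F V)) G2 / ennreal (b (the (F V))))))"
proof -
  have "E_forest K \<zeta> x (\<lambda>F. \<Sum>v\<in>dom F. G1 v (prune F v) * G2 (fringe F v))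
      = (\<Sum>\<^sub>\<infinity>ts\<in>{ts. length ts = length x}. \<Sum>j=1..length x.
           ennreal (\<Prod>l<length x. gw K \<zeta> (x ! l) (ts ! l))
           * (\<Sum>u\<in>dom (ts ! (j - 1)). G1 (j # u) (prune (forest_of ts) (j # u))
                * G2 (fringe (forest_of ts) (j # u))))"
    unfolding E_forest_def by (intro infsum_cong) (simp add: forest_weight_sum_dom)
  also have "\<dots> = (\<Sum>j=1..length x. \<Sum>\<^sub>\<infinity>ts\<in>{ts. length ts = length x}.
           ennreal (\<Prod>l<length x. gw K \<zeta> (x ! l) (ts ! l))
           * (\<Sum>u\<in>dom (ts ! (j - 1)). G1 (j # u) (prune (forest_of ts) (j # u))
                * G2 (fringe (forest_of ts) (j # u))))"
    by (rule infsum_sum_ennreal) simp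
  also have "\<dots> = (\<Sum>j=1..length x. ennreal (b (x ! (j - 1)))
            * (\<Sum>h. E_hat K \<zeta> b x j h
                 (\<lambda>V F. G1 V F * E_tree K \<zeta> (the (F V)) G2 / ennreal (b (the (F V))))))"
    using E_forest_component[OF _ _ assms(4)] by (intro sum.cong) auto
  finally show ?thesis .
qed

end
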